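(* Let $q$ be a prime power and $\eta\ge2$, $(\delta_T,\delta_X)\in\mathbb{Z}\times\mathbb{N}$ with $\delta_T<0$, $\eta\mid\delta_T$ and $q\le\delta/\eta$, where $\delta=\delta_T+\eta\delta_X$. Write $\delta/\eta=k(q-1)+r$ with $k\in\mathbb{N}$ and $r\in\{1,\dots,q-1\}$. Then the polynomial \[F_0=X_1^{-\delta_T/\eta}X_2^{\delta/\eta}-T_1^{\eta k(q-1)}X_1^{k(q-1)-\delta_T/\eta}X_2^{r}+T_1^{(\eta k-1)(q-1)}T_2^{q-1}X_1^{k(q-1)-\delta_T/\eta}X_2^{r}-T_2^{\eta k(q-1)}X_1^{k(q-1)-\delta_T/\eta}X_2^{r}\] lies in the kernel of $\mathrm{ev}_{(\delta_T,\delta_X)}$, i.e. it vanishes at every $\mathbb{F}_q$-rational point of $\mathcal{H}_\eta$.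
   Context: $R=\mathbb{F}_q[T_1,T_2,X_1,X_2]$; the bidegree of $T_1^{c_1}T_2^{c_2}X_1^{d_1}X_2^{d_2}$ is $(c_1+c_2-\eta d_1,d_1+d_2)$ ($F_0$ has bidegree $(\delta_T,\delta_X)$). The Hirzebruch surface $\mathcal{H}_\eta$ is the quotient of $(\mathbb{A}^2\setminus\{0\})^2$ by $\mathbb{G}_m^2$ acting by $(\lambda,\mu)\cdot(t_1,t_2,x_1,x_2)=(\lambda t_1,\lambda t_2,\mu\lambda^{-\eta}x_1,\mu x_2)$; each of its $\mathbb{F}_q$-points has a unique representative of the form $(1,a,1,b)$, $(0,1,1,b)$, $(1,a,0,1)$ or $(0,1,0,1)$ ($a,b\in\mathbb{F}_q$), where polynomials are evaluated; $\mathrm{ev}_{(\delta_T,\delta_X)}$ maps a bidegree-$(\delta_T,\delta_X)$ polynomial to its vector of values at these points. *)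

theory Defs
  imports Main
begin

text \<open>Representatives of the F_q-rational points of the Hirzebruch surface H_eta:
  (1,a,1,b), (0,1,1,b), (1,a,0,1), (0,1,0,1) with a, b in F_q.\<close>
definition hirzebruch_points :: "('a::field \<times> 'a \<times> 'a \<times> 'a) set" where
  "hirzebruch_points =
     {(1, a, 1, b) | a b. True} \<union> {(0, 1, 1, b) | b. True} \<union>
     {(1, a, 0, 1) | a. True} \<union> {(0, 1, 0, 1)}"

text \<open>Here -delta_T/eta and delta/eta = delta_T/eta + delta_X
  are exact integer quotients (eta divides delta_T).\<close>
definition F0_eval ::
  "nat \<Rightarrow> nat \<Rightarrow> int \<Rightarrow> nat \<Rightarrow> nat \<Rightarrow> nat \<Rightarrow> 'a::comm_ring_1 \<Rightarrow> 'a \<Rightarrow> 'a \<Rightarrow> 'a \<Rightarrow> 'a" where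
  "F0_eval q \<eta> \<delta>T \<delta>X k r t1 t2 x1 x2 =
     (let a = nat (- \<delta>T div int \<eta>);
          D = nat ((\<delta>T + int \<eta> * int \<delta>X) div int \<eta>);
          e = k * (q - 1) + a
      in x1 ^ a * x2 ^ D
         - t1 ^ (\<eta> * k * (q - 1)) * x1 ^ e * x2 ^ r
         + t1 ^ ((\<eta> * k - 1) * (q - 1)) * t2 ^ (q - 1) * x1 ^ e * x2 ^ r
         - t2 ^ (\<eta> * k * (q - 1)) * x1 ^ e * x2 ^ r)"

end

theory Submission
  imports Defs
begin

text \<open>At the points with \<open>x\<^sub>1 = 1\<close> the polynomial reduces, by Fermat's little
  theorem \<open>u\<^sup>q\<^sup>-\<^sup>1 = 1\<close> for \<open>u \<noteq> 0\<close>, to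
  \<open>b\<^sup>r - b\<^sup>r + s\<^sup>q\<^sup>-\<^sup>1 b\<^sup>r - s\<^sup>q\<^sup>-\<^sup>1 b\<^sup>r\<close> (where \<open>t\<^sub>1 = 1\<close>), or to
  \<open>b\<^sup>r - b\<^sup>r\<close> (where \<open>t\<^sub>1 = 0\<close>); at the points with \<open>x\<^sub>1 = 0\<close> every monomial contains
  \<open>x\<^sub>1\<close> since \<open>-\<delta>\<^sub>T/\<eta> \<ge> 1\<close>.  The hypothesis \<open>q \<le> \<delta>/\<eta>\<close> only serves to make \<open>k \<ge> 1\<close>,
  so that the exponents \<open>\<eta>k(q-1)\<close> and \<open>(\<eta>k-1)(q-1)\<close> are positive.\<close>

lemma card_UNIV_field_ge_2: "card (UNIV :: 'a::{finite,field} set) \<ge> 2"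
proof -
  have "card {0::'a, 1} \<le> card (UNIV :: 'a set)"
    by (rule card_mono[OF finite_UNIV]) simp
  then show ?thesis by simp
qed

lemma finite_field_power_card_minus_one:
  fixes x :: "'a::{finite,field}"
  assumes "x \<noteq> 0"
  shows "x ^ (card (UNIV :: 'a set) - 1) = 1"
proof -
  let ?U = "UNIV - {0::'a}"
  have "(\<Prod>y\<in>?U. x * y) = (\<Prod>y\<in>?U. y)"
    by (rule prod.reindex_bij_witness[of _ "\<lambda>y. y / x" "\<lambda>y. x * y"]) (use assms in auto)
  moreover have "(\<Prod>y\<in>?U. x * y) = x ^ card ?U * (\<Prod>y\<in>?U. y)"
    by (simp add: prod.distrib)
  moreover have "(\<Prod>y\<in>?U. y) \<noteq> 0"
    by simp
  ultimately show ?thesis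
    by (simp add: card_Diff_singleton)
qed

lemma finite_field_power_mult_card_minus_one_add:
  fixes x :: "'a::{finite,field}"
  assumes "n \<ge> 1"
  shows "x ^ (m * (card (UNIV :: 'a set) - 1) + n) = x ^ n"
proof (cases "x = 0")
  case True
  then show ?thesis using assms by (simp add: power_0_left)
next
  case False
  then show ?thesis
    by (simp only: power_add mult.commute[of m] power_mult
        finite_field_power_card_minus_one[OF False] power_one mult_1)
qed

lemma finite_field_power_mult_card_minus_one:
  fixes x :: "'a::{finite,field}"
  assumes "m \<ge> 1"
  shows "x ^ (m * (card (UNIV :: 'a set) - 1)) = x ^ (card (UNIV :: 'a set) - 1)"
proof -
  let ?q = "card (UNIV :: 'a set)"
  have "m * (?q - 1) = (m - 1) * (?q - 1) + (?q - 1)"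
    using assms by (cases m) simp_all
  moreover have "?q - 1 \<ge> 1"
    using card_UNIV_field_ge_2[where 'a='a] by simp
  ultimately show ?thesis
    using finite_field_power_mult_card_minus_one_add[of "?q - 1" x "m - 1"] by simp
qed

lemma F0_form_vanishes_on_hirzebruch_points:
  fixes a n m r :: nat and q :: nat
  assumes q: "q = card (UNIV :: 'a::{finite,field} set)"
    and a: "a \<ge> 1" and n: "n \<ge> 2" and r: "r \<ge> 1"
  defines "e \<equiv> m * (q - 1) + a"
  shows "\<forall>(t1, t2, x1, x2) \<in> (hirzebruch_points :: ('a \<times> 'a \<times> 'a \<times> 'a) set).
           x1 ^ a * x2 ^ (m * (q - 1) + r)
           - t1 ^ (n * (q - 1)) * x1 ^ e * x2 ^ r
           + t1 ^ ((n - 1) * (q - 1)) * t2 ^ (q - 1) * x1 ^ e * x2 ^ r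
           - t2 ^ (n * (q - 1)) * x1 ^ e * x2 ^ r = 0" (is "Ball _ ?vanishes")
proof -
  have "q \<ge> 2"
    using q card_UNIV_field_ge_2[where 'a='a] by simp
  then have zero_powers: "(0::'a) ^ (q - 1) = 0" "(0::'a) ^ ((n - 1) * (q - 1)) = 0"
    "(0::'a) ^ a = 0" "(0::'a) ^ e = 0"
    using n a by (simp_all add: power_0_left e_def)
  have reduce_x2: "(b::'a) ^ (m * (q - 1) + r) = b ^ r" for b
    using finite_field_power_mult_card_minus_one_add r q by blast
  have reduce_t2: "(b::'a) ^ (n * (q - 1)) = b ^ (q - 1)" for b
    using finite_field_power_mult_card_minus_one[of n b] n q by simp
  show ?thesis
    unfolding hirzebruch_points_def
  proof (intro ballI)
    fix p :: "'a \<times> 'a \<times> 'a \<times> 'a"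
    assume "p \<in> {(1, a, 1, b) | a b. True} \<union> {(0, 1, 1, b) | b. True} \<union>
      {(1, a, 0, 1) | a. True} \<union> {(0, 1, 0, 1)}"
    then consider (affine) s b where "p = (1, s, 1, b)" | (fibre) b where "p = (0, 1, 1, b)"
      | (zero_section) s where "p = (1, s, 0, 1)" | (corner) "p = (0, 1, 0, 1)"
      by blast
    then show "?vanishes p"
      by cases (simp_all add: zero_powers reduce_x2 reduce_t2 del: One_nat_def)
  qed
qed

theorem lemma2p15:
  fixes \<eta> :: nat and \<delta>T :: int and \<delta>X :: nat and k :: nat and r :: nat
    and q :: nat
  assumes q_def: "q = card (UNIV :: 'a::{finite,field} set)"
    and eta: "\<eta> \<ge> 2"
    and neg: "\<delta>T < 0"
    and dvd: "int \<eta> dvd \<delta>T"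
    and qle: "int q \<le> (\<delta>T + int \<eta> * int \<delta>X) div int \<eta>"
    and decomp: "(\<delta>T + int \<eta> * int \<delta>X) div int \<eta> = int (k * (q - 1) + r)"
    and r: "1 \<le> r" "r \<le> q - 1"
  shows "\<forall>(t1, t2, x1, x2) \<in> (hirzebruch_points :: ('a \<times> 'a \<times> 'a \<times> 'a) set).
           F0_eval q \<eta> \<delta>T \<delta>X k r t1 t2 x1 x2 = 0"
proof -
  define a where "a = nat (- \<delta>T div int \<eta>)"
  obtain c where c: "\<delta>T = int \<eta> * c"
    using dvd by blast
  have "a = nat (- c)"
    using eta by (simp add: a_def c zdiv_zminus1_eq_if)
  then have "a \<ge> 1"
    using neg eta by (simp add: c mult_less_0_iff)
  have "k \<ge> 1"
    using qle decomp r by (cases k) auto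
  then have "\<eta> * k \<ge> 2"
    using mult_le_mono[OF eta, of 1 k] by simp
  have D: "nat ((\<delta>T + int \<eta> * int \<delta>X) div int \<eta>) = k * (q - 1) + r"
    by (simp only: decomp nat_int)
  have "F0_eval q \<eta> \<delta>T \<delta>X k r t1 t2 x1 x2 =
      x1 ^ a * x2 ^ (k * (q - 1) + r)
      - t1 ^ (\<eta> * k * (q - 1)) * x1 ^ (k * (q - 1) + a) * x2 ^ r
      + t1 ^ ((\<eta> * k - 1) * (q - 1)) * t2 ^ (q - 1) * x1 ^ (k * (q - 1) + a) * x2 ^ r
      - t2 ^ (\<eta> * k * (q - 1)) * x1 ^ (k * (q - 1) + a) * x2 ^ r" for t1 t2 x1 x2 :: 'a
    unfolding F0_eval_def Let_def D a_def ..
  then show ?thesis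
    using F0_form_vanishes_on_hirzebruch_points[OF q_def \<open>a \<ge> 1\<close> \<open>\<eta> * k \<ge> 2\<close> r(1), of k]
    by (simp only:)
qed

end
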